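(* Let $P$ be an $n$-element poset, $L$ a labeling of $P$, $x_0\in P$, $\tilde P=P\setminus\{x_0\}$ with the induced order, and $\tilde L=\mathrm{st}(L|_{\tilde P})$. Let $\gamma\ge0$ and suppose $x_0$ is not in the promotion chain of $L_\alpha$ for any $\alpha\in\{0,\ldots,\gamma-1\}$. Then $\mathrm{st}(L_\gamma|_{\tilde P})=\tilde\partial^{\gamma}(\tilde L)$, where $\tilde\partial$ denotes promotion on labelings of the $(n-1)$-element poset $\tilde P$.
   Context: A labeling of an $m$-element poset is a bijection to $[m]$. Promotion $\partial$ on an $m$-element poset: for non-maximal $y$, the $L$-successor of $y$ is the element greater than $y$ with minimal label; the promotion chain is $v_1=L^{-1}(1)$, $v_{i+1}$ the $L$-successor of $v_i$, ending at the first maximal $v_p$; $\partial(L)(y)=L(y)-1$ off the chain, $\partial(L)(v_i)=L(v_{i+1})-1$ for $i<p$, $\partial(L)(v_p)=m$. $L_\gamma=\partial^\gamma(L)$. For an injective $f:Y\to\mathbb Z$ on an $m$-element set, the standardization $\mathrm{st}(f)$ is the unique bijection $g:Y\to[m]$ with $g(y)<g(y')$ iff $f(y)<f(y')$. *)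

theory Defs
  imports Main
begin

definition is_poset :: "'a set \<Rightarrow> ('a \<Rightarrow> 'a \<Rightarrow> bool) \<Rightarrow> bool" where
  "is_poset P le \<longleftrightarrow> finite P \<and>
     (\<forall>x\<in>P. le x x) \<and>
     (\<forall>x\<in>P. \<forall>y\<in>P. le x y \<and> le y x \<longrightarrow> x = y) \<and>
     (\<forall>x\<in>P. \<forall>y\<in>P. \<forall>z\<in>P. le x y \<and> le y z \<longrightarrow> le x z)"

definition is_labeling :: "'a set \<Rightarrow> ('a \<Rightarrow> nat) \<Rightarrow> bool" where
  "is_labeling P L \<longleftrightarrow> bij_betw L P {1..card P}"

definition is_maximal :: "'a set \<Rightarrow> ('a \<Rightarrow> 'a \<Rightarrow> bool) \<Rightarrow> 'a \<Rightarrow> bool" where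
  "is_maximal P le y \<longleftrightarrow> y \<in> P \<and> \<not> (\<exists>z\<in>P. le y z \<and> z \<noteq> y)"

definition lsucc :: "'a set \<Rightarrow> ('a \<Rightarrow> 'a \<Rightarrow> bool) \<Rightarrow> ('a \<Rightarrow> nat) \<Rightarrow> 'a \<Rightarrow> 'a" where
  "lsucc P le L y = arg_min L (\<lambda>z. z \<in> P \<and> le y z \<and> z \<noteq> y)"

text \<open>v_(i+1) in the paper's 1-based indexing is chain_elem P le L i.\<close>
definition chain_elem :: "'a set \<Rightarrow> ('a \<Rightarrow> 'a \<Rightarrow> bool) \<Rightarrow> ('a \<Rightarrow> nat) \<Rightarrow> nat \<Rightarrow> 'a" where
  "chain_elem P le L i = (lsucc P le L ^^ i) (inv_into P L 1)"

definition chain_len :: "'a set \<Rightarrow> ('a \<Rightarrow> 'a \<Rightarrow> bool) \<Rightarrow> ('a \<Rightarrow> nat) \<Rightarrow> nat" where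
  "chain_len P le L = (LEAST i. is_maximal P le (chain_elem P le L i))"

definition promotion_chain :: "'a set \<Rightarrow> ('a \<Rightarrow> 'a \<Rightarrow> bool) \<Rightarrow> ('a \<Rightarrow> nat) \<Rightarrow> 'a set" where
  "promotion_chain P le L = {chain_elem P le L i | i. i \<le> chain_len P le L}"

definition promotion :: "'a set \<Rightarrow> ('a \<Rightarrow> 'a \<Rightarrow> bool) \<Rightarrow> ('a \<Rightarrow> nat) \<Rightarrow> ('a \<Rightarrow> nat)" where
  "promotion P le L = (\<lambda>y.
     if y \<notin> P then 0
     else if y \<in> promotion_chain P le L then
       (if is_maximal P le y then card P else L (lsucc P le L y) - 1)
     else L y - 1)"

definition standardize :: "'a set \<Rightarrow> ('a \<Rightarrow> nat) \<Rightarrow> ('a \<Rightarrow> nat)" where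
  "standardize Y f = (THE g. bij_betw g Y {1..card Y} \<and>
       (\<forall>y\<in>Y. \<forall>y'\<in>Y. g y < g y' \<longleftrightarrow> f y < f y') \<and>
       (\<forall>y. y \<notin> Y \<longrightarrow> g y = 0))"

end

theory Submission
  imports Defs
begin

text \<open>Promotion is a relabeling along a permutation: if \<open>\<sigma>\<close> shifts the promotion chain
  cyclically (\<open>v\<^sub>i \<mapsto> v\<^sub>i\<^sub>+\<^sub>1\<close>, \<open>v\<^sub>p \<mapsto> v\<^sub>1\<close>) and fixes everything else, and \<open>L\<^sup>+\<close> is \<open>L\<close> with the label 1
  replaced by \<open>n + 1\<close>, then \<open>\<partial>(L) = L\<^sup>+ \<circ> \<sigma> - 1\<close>. Successors are determined by the relative
  order of labels, which standardization preserves; so when \<open>x\<^sub>0\<close> is off the chain, deleting it and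
  standardizing leaves the chain, its maximality pattern and \<open>\<sigma>\<close> unchanged, and \<open>L\<^sup>+\<close> and
  \<open>(st L)\<^sup>+\<close> are order-equivalent on \<open>P - {x\<^sub>0}\<close>. Hence standardization commutes with one
  promotion step, and with \<open>\<gamma>\<close> steps by induction.\<close>

lemma bij_betw_if_inj_on_card_eq:
  assumes "inj_on g A" "g ` A \<subseteq> B" "finite B" "card A = card B"
  shows "bij_betw g A B"
  using assms by (simp add: bij_betw_def card_image card_subset_eq)

lemma order_bij_eq_rank:
  fixes f :: "'a \<Rightarrow> nat"
  assumes bij: "bij_betw g Y {1..card Y}"
    and ord: "\<forall>y\<in>Y. \<forall>y'\<in>Y. g y < g y' \<longleftrightarrow> f y < f y'" and y: "y \<in> Y"
  shows "g y = card {y'\<in>Y. f y' \<le> f y}"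
proof -
  have same_set: "{y'\<in>Y. f y' \<le> f y} = {y'\<in>Y. g y' \<le> g y}"
    using ord y by (auto simp: not_less[symmetric])
  have image: "g ` Y = {1..card Y}" and inj: "inj_on g Y"
    using bij by (simp_all add: bij_betw_def)
  have "g ` {y'\<in>Y. g y' \<le> g y} = {1..g y}"
  proof
    show "{1..g y} \<subseteq> g ` {y'\<in>Y. g y' \<le> g y}"
    proof
      fix k assume k: "k \<in> {1..g y}"
      moreover have "g y \<le> card Y" using image y by auto
      ultimately have "k \<in> g ` Y" using image by auto
      with k show "k \<in> g ` {y'\<in>Y. g y' \<le> g y}" by auto
    qed
  qed (use image in force)
  moreover have "inj_on g {y'\<in>Y. g y' \<le> g y}"
    using inj by (rule inj_on_subset) auto
  ultimately show ?thesis
    using same_set card_image by fastforce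
qed
lemma standardize_eqI:
  fixes f :: "'a \<Rightarrow> nat"
  assumes bij: "bij_betw g Y {1..card Y}"
    and ord: "\<forall>y\<in>Y. \<forall>y'\<in>Y. g y < g y' \<longleftrightarrow> f y < f y'"
    and outside: "\<forall>y. y \<notin> Y \<longrightarrow> g y = 0"
  shows "standardize Y f = g"
  unfolding standardize_def
proof (rule the_equality)
  fix g' assume g': "bij_betw g' Y {1..card Y} \<and> (\<forall>y\<in>Y. \<forall>y'\<in>Y. g' y < g' y' \<longleftrightarrow> f y < f y')
    \<and> (\<forall>y. y \<notin> Y \<longrightarrow> g' y = 0)"
  show "g' = g"
  proof
    fix y show "g' y = g y"
      using g' outside order_bij_eq_rank[OF bij ord] order_bij_eq_rank[of g' Y f] by (cases "y \<in> Y") auto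
  qed
qed (use assms in blast)

lemma standardize:
  fixes f :: "'a \<Rightarrow> nat"
  assumes fin: "finite Y" and inj: "inj_on f Y"
  shows bij_betw_standardize: "bij_betw (standardize Y f) Y {1..card Y}"
    and standardize_less_iff:
      "\<lbrakk>y \<in> Y; y' \<in> Y\<rbrakk> \<Longrightarrow> standardize Y f y < standardize Y f y' \<longleftrightarrow> f y < f y'"
proof -
  define rank where "rank = (\<lambda>y. if y \<in> Y then card {y'\<in>Y. f y' \<le> f y} else 0)"
  have ord: "\<forall>y\<in>Y. \<forall>y'\<in>Y. rank y < rank y' \<longleftrightarrow> f y < f y'"
  proof (intro ballI iffI)
    fix y y' assume y: "y \<in> Y" and y': "y' \<in> Y"
    { assume "f y < f y'"
      then have "y' \<in> {z\<in>Y. f z \<le> f y'} - {z\<in>Y. f z \<le> f y}" using y' by auto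
      with \<open>f y < f y'\<close> have "{z\<in>Y. f z \<le> f y} \<subset> {z\<in>Y. f z \<le> f y'}" by fastforce
      then show "rank y < rank y'" using y y' fin by (simp add: rank_def psubset_card_mono) }
    { assume "rank y < rank y'"
      moreover have "\<not> f y < f y' \<Longrightarrow> rank y' \<le> rank y"
        using y y' fin by (auto simp: rank_def intro!: card_mono)
      ultimately show "f y < f y'" by linarith }
  qed
  have "inj_on rank Y"
  proof
    fix y y' assume "y \<in> Y" "y' \<in> Y" "rank y = rank y'"
    with ord inj show "y = y'" by (metis inj_on_eq_iff linorder_neqE_nat less_irrefl)
  qed
  moreover have "rank ` Y \<subseteq> {1..card Y}"
    using fin by (auto simp: rank_def Suc_le_eq card_gt_0_iff intro!: card_mono)
  ultimately have bij: "bij_betw rank Y {1..card Y}"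
    by (simp add: bij_betw_if_inj_on_card_eq)
  have "standardize Y f = rank"
    by (rule standardize_eqI[OF bij ord]) (simp add: rank_def)
  then show "bij_betw (standardize Y f) Y {1..card Y}"
    and "\<lbrakk>y \<in> Y; y' \<in> Y\<rbrakk> \<Longrightarrow> standardize Y f y < standardize Y f y' \<longleftrightarrow> f y < f y'"
    using bij ord by simp_all
qed

lemma is_poset_subset: "is_poset P le \<Longrightarrow> Q \<subseteq> P \<Longrightarrow> is_poset Q le"
  unfolding is_poset_def by (meson finite_subset subsetD)

lemma lsucc_above:
  assumes "y \<in> P" and "\<not> is_maximal P le y"
  shows "lsucc P le L y \<in> P" and "le y (lsucc P le L y)" and "lsucc P le L y \<noteq> y"
    and "\<And>z. \<lbrakk>z \<in> P; le y z; z \<noteq> y\<rbrakk> \<Longrightarrow> L (lsucc P le L y) \<le> L z"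
proof -
  obtain z where "z \<in> P" "le y z" "z \<noteq> y" using assms by (auto simp: is_maximal_def)
  then have "(\<lambda>z. z \<in> P \<and> le y z \<and> z \<noteq> y) z" by simp
  from arg_min_nat_lemma[of "\<lambda>z. z \<in> P \<and> le y z \<and> z \<noteq> y", OF this, of L]
  show "lsucc P le L y \<in> P" and "le y (lsucc P le L y)" and "lsucc P le L y \<noteq> y"
    and "\<And>z. \<lbrakk>z \<in> P; le y z; z \<noteq> y\<rbrakk> \<Longrightarrow> L (lsucc P le L y) \<le> L z"
    by (simp_all add: lsucc_def)
qed

lemma lsucc_restrict:
  assumes y: "y \<in> Q" "Q \<subseteq> P" "\<not> is_maximal P le y" and succ: "lsucc P le L y \<in> Q"
    and inj: "inj_on L' Q" and ord: "\<And>z z'. \<lbrakk>z \<in> Q; z' \<in> Q\<rbrakk> \<Longrightarrow> L' z < L' z' \<longleftrightarrow> L z < L z'"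
  shows "lsucc Q le L' y = lsucc P le L y"
proof -
  let ?w = "lsucc P le L y" and ?R = "\<lambda>z. z \<in> Q \<and> le y z \<and> z \<noteq> y"
  have "y \<in> P" using y by auto
  note w = lsucc_above[OF this y(3), where L = L]
  have Rw: "?R ?w" using succ w by simp
  have "L' ?w \<le> L' z" if "?R z" for z
    using that y(2) w(4)[of z] ord[of z ?w] succ by (auto simp: not_less[symmetric])
  then have "L' (arg_min L' ?R) = L' ?w"
    by (rule arg_min_equality[of ?R, OF Rw])
  moreover have "?R (arg_min L' ?R)" by (rule arg_min_natI[of ?R, OF Rw])
  ultimately show ?thesis
    using inj succ by (simp add: lsucc_def inj_on_eq_iff)
qed

locale labeled_poset =
  fixes P :: "'a set" and le :: "'a \<Rightarrow> 'a \<Rightarrow> bool" and L :: "'a \<Rightarrow> nat"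
  assumes poset: "is_poset P le" and labeling: "is_labeling P L" and nonempty: "P \<noteq> {}"
begin

abbreviation "v \<equiv> chain_elem P le L"
abbreviation "p \<equiv> chain_len P le L"

lemma finite_P: "finite P"
  using poset by (simp add: is_poset_def)

lemma le_trans: "\<lbrakk>x \<in> P; y \<in> P; z \<in> P; le x y; le y z\<rbrakk> \<Longrightarrow> le x z"
  using poset unfolding is_poset_def by blast

lemma le_antisym: "\<lbrakk>x \<in> P; y \<in> P; le x y; le y x\<rbrakk> \<Longrightarrow> x = y"
  using poset unfolding is_poset_def by blast

lemma inj_L: "inj_on L P"
  using labeling by (simp add: is_labeling_def bij_betw_def)

lemma L_image: "L ` P = {1..card P}"
  using labeling by (simp add: is_labeling_def bij_betw_def)

lemma chain_elem_0: "v 0 \<in> P" "L (v 0) = 1"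
proof -
  have "1 \<in> L ` P" using L_image finite_P nonempty by (simp add: Suc_le_eq card_gt_0_iff)
  then show "v 0 \<in> P" "L (v 0) = 1" by (simp_all add: chain_elem_def inv_into_into f_inv_into_f)
qed

lemma label_eq_1_iff: "z \<in> P \<Longrightarrow> L z = 1 \<longleftrightarrow> z = v 0"
  using chain_elem_0 inj_L by (metis inj_on_eq_iff)

lemma chain_elem_Suc: "v (Suc i) = lsucc P le L (v i)"
  by (simp add: chain_elem_def)

lemma chain_increasing:
  "\<forall>k<j. \<not> is_maximal P le (v k) \<Longrightarrow>
     (\<forall>i\<le>j. v i \<in> P) \<and> (\<forall>i<j. le (v i) (v j) \<and> v i \<noteq> v j)"
proof (induction j)
  case 0
  then show ?case using chain_elem_0 by simp
next
  case (Suc j)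
  then have IH: "\<forall>i\<le>j. v i \<in> P" "\<forall>i<j. le (v i) (v j) \<and> v i \<noteq> v j" by auto
  have vj: "v j \<in> P" and "\<not> is_maximal P le (v j)" using IH Suc.prems by auto
  note succ = lsucc_above[OF this, where L = L, folded chain_elem_Suc]
  have "le (v i) (v (Suc j)) \<and> v i \<noteq> v (Suc j)" if "i < Suc j" for i
  proof (cases "i = j")
    case False
    with that have "v i \<in> P" "le (v i) (v j)" "v i \<noteq> v j" using IH by auto
    then show ?thesis
      using vj succ le_trans[of "v i" "v j" "v (Suc j)"] le_antisym[of "v j" "v i"] by auto
  qed (use succ in auto)
  then show ?case using IH(1) succ(1) le_Suc_eq by auto
qed

lemma ex_maximal_chain_elem: "\<exists>i. is_maximal P le (v i)"
proof (rule ccontr)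
  assume "\<nexists>i. is_maximal P le (v i)"
  then have "inj v" and "range v \<subseteq> P"
    using chain_increasing by (metis linorder_injI, blast)
  then show False
    using finite_P by (meson finite_imageD finite_subset infinite_UNIV_nat)
qed

lemma maximal_chain_len: "is_maximal P le (v p)"
  unfolding chain_len_def using ex_maximal_chain_elem by (rule LeastI_ex)

lemma not_maximal_below_chain_len: "i < p \<Longrightarrow> \<not> is_maximal P le (v i)"
  unfolding chain_len_def by (rule not_less_Least)

lemma chain_elem_in_P: "i \<le> p \<Longrightarrow> v i \<in> P"
  using chain_increasing[of p] not_maximal_below_chain_len by blast

lemma chain_elem_inj:
  assumes "i \<le> p" "j \<le> p" "v i = v j"
  shows "i = j"
proof -
  have "v i \<noteq> v j" if "i < j" "j \<le> p" for i j
    using chain_increasing[of j] not_maximal_below_chain_len that by auto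
  with assms show ?thesis by (metis linorder_neqE_nat)
qed

lemma promotion_chain_eq: "promotion_chain P le L = v ` {..p}"
  unfolding promotion_chain_def by auto

lemma promotion_chain_subset: "promotion_chain P le L \<subseteq> P"
  using chain_elem_in_P by (auto simp: promotion_chain_eq)

end

text \<open>\<open>promotion_shift\<close> is \<open>\<sigma>\<close> and \<open>lift_label\<close> is \<open>L\<^sup>+\<close>.\<close>
definition promotion_shift :: "'a set \<Rightarrow> ('a \<Rightarrow> 'a \<Rightarrow> bool) \<Rightarrow> ('a \<Rightarrow> nat) \<Rightarrow> 'a \<Rightarrow> 'a" where
  "promotion_shift P le L y =
     (if y \<in> promotion_chain P le L then
        (if is_maximal P le y then chain_elem P le L 0 else lsucc P le L y)
      else y)"

definition lift_label :: "'a set \<Rightarrow> ('a \<Rightarrow> nat) \<Rightarrow> 'a \<Rightarrow> nat" where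
  "lift_label P L z = (if L z = 1 then Suc (card P) else L z)"

context labeled_poset
begin

abbreviation "shift \<equiv> promotion_shift P le L"

lemma shift_chain_elem:
  assumes "i \<le> p"
  shows "shift (v i) = v (if i = p then 0 else Suc i)"
proof -
  have in_chain: "v i \<in> promotion_chain P le L"
    using assms by (simp add: promotion_chain_eq)
  show ?thesis
  proof (cases "i = p")
    case True
    then show ?thesis using in_chain maximal_chain_len by (simp add: promotion_shift_def)
  next
    case False
    then have "\<not> is_maximal P le (v i)" using assms not_maximal_below_chain_len by simp
    then show ?thesis using in_chain False by (simp add: promotion_shift_def chain_elem_Suc)
  qed
qed

lemma shift_outside_chain: "y \<notin> promotion_chain P le L \<Longrightarrow> shift y = y"
  by (simp add: promotion_shift_def)

lemma shift_in_chain: "y \<in> promotion_chain P le L \<Longrightarrow> shift y \<in> promotion_chain P le L"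
  using shift_chain_elem by (auto simp: promotion_chain_eq)

lemma inj_on_shift: "inj_on shift P"
proof
  fix y y' assume "y \<in> P" "y' \<in> P" and eq: "shift y = shift y'"
  show "y = y'"
  proof (cases "y \<in> promotion_chain P le L \<and> y' \<in> promotion_chain P le L")
    case True
    then obtain i j where ij: "i \<le> p" "j \<le> p" "y = v i" "y' = v j"
      by (auto simp: promotion_chain_eq)
    let ?next = "\<lambda>i. if i = p then 0 else Suc i"
    have "v (?next i) = v (?next j)"
      using eq ij shift_chain_elem by simp
    then have "?next i = ?next j"
      using ij by (intro chain_elem_inj) auto
    then have "i = j"
      using ij by (auto split: if_splits)
    then show ?thesis using ij by simp
  next
    case False
    then show ?thesis
      using eq shift_in_chain shift_outside_chain by metis
  qed
qed

lemma bij_shift: "bij_betw shift P P"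
proof -
  have "shift ` P \<subseteq> P"
    using shift_in_chain shift_outside_chain promotion_chain_subset by (metis image_subsetI subsetD)
  then show ?thesis
    using finite_P inj_on_shift by (simp add: bij_betw_def endo_inj_surj)
qed

lemma promotion_eq_lift_shift:
  assumes "y \<in> P"
  shows "promotion P le L y = lift_label P L (shift y) - 1"
proof (cases "y \<in> promotion_chain P le L")
  case True
  then obtain i where i: "i \<le> p" "y = v i" by (auto simp: promotion_chain_eq)
  show ?thesis
  proof (cases "i = p")
    case True
    then show ?thesis
      using i maximal_chain_len chain_elem_0 chain_elem_in_P shift_chain_elem[OF i(1)]
        \<open>y \<in> promotion_chain P le L\<close>
      by (simp add: promotion_def lift_label_def assms)
  next
    case False
    then have "Suc i \<le> p" "L (v (Suc i)) \<noteq> 1"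
      using i chain_elem_inj[of "Suc i" 0] label_eq_1_iff chain_elem_in_P by auto
    then show ?thesis
      using i False not_maximal_below_chain_len[of i] chain_elem_in_P shift_chain_elem[OF i(1)]
        \<open>y \<in> promotion_chain P le L\<close>
      by (simp add: promotion_def lift_label_def assms chain_elem_Suc)
  qed
next
  case False
  moreover have "v 0 \<in> promotion_chain P le L" by (auto simp: promotion_chain_eq)
  ultimately have "L y \<noteq> 1" using label_eq_1_iff assms by auto
  with False show ?thesis
    by (simp add: promotion_def lift_label_def shift_outside_chain assms)
qed

lemma lift_label_pos: "z \<in> P \<Longrightarrow> 0 < lift_label P L z"
  using L_image by (force simp: lift_label_def)

lemma bij_lift_label_minus_1: "bij_betw (\<lambda>z. lift_label P L z - 1) P {1..card P}"
proof (rule bij_betw_if_inj_on_card_eq)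
  show "inj_on (\<lambda>z. lift_label P L z - 1) P"
  proof
    fix z z' assume z: "z \<in> P" "z' \<in> P" and eq: "lift_label P L z - 1 = lift_label P L z' - 1"
    have "L z \<in> {1..card P}" "L z' \<in> {1..card P}"
      using L_image z by auto
    with eq have "L z = L z'"
      by (auto simp: lift_label_def split: if_splits)
    with inj_L z show "z = z'"
      by (simp add: inj_on_eq_iff)
  qed
  have "L z \<in> {1..card P}" if "z \<in> P" for z
    using L_image that by auto
  then show "(\<lambda>z. lift_label P L z - 1) ` P \<subseteq> {1..card P}"
    by (force simp: lift_label_def)
qed simp_all

lemma is_labeling_promotion: "is_labeling P (promotion P le L)"
proof -
  have "bij_betw ((\<lambda>z. lift_label P L z - 1) \<circ> shift) P {1..card P}"
    using bij_shift bij_lift_label_minus_1 by (rule bij_betw_trans)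
  then show ?thesis
    unfolding is_labeling_def by (rule bij_betw_cong[THEN iffD1, rotated]) (simp add: promotion_eq_lift_shift)
qed

end

locale labeled_poset_deletion = labeled_poset +
  fixes x0 :: 'a
  assumes x0_off_chain: "x0 \<notin> promotion_chain P le L"
begin

abbreviation "Q \<equiv> P - {x0}"
abbreviation "L' \<equiv> standardize Q L"

lemma chain_subset_Q: "promotion_chain P le L \<subseteq> Q"
  using promotion_chain_subset x0_off_chain by auto

lemma chain_elem_in_Q: "i \<le> p \<Longrightarrow> v i \<in> Q"
  using chain_subset_Q by (auto simp: promotion_chain_eq)

lemma inj_on_L_Q: "inj_on L Q"
  using inj_L by (rule inj_on_subset) blast

lemma is_labeling_L': "is_labeling Q L'"
  unfolding is_labeling_def using finite_P inj_on_L_Q by (intro bij_betw_standardize) auto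

lemma L'_less_iff: "\<lbrakk>y \<in> Q; y' \<in> Q\<rbrakk> \<Longrightarrow> L' y < L' y' \<longleftrightarrow> L y < L y'"
  using finite_P inj_on_L_Q by (intro standardize_less_iff) auto

sublocale deleted: labeled_poset Q le L'
  using is_poset_subset[OF poset] is_labeling_L' chain_elem_in_Q[of 0] by unfold_locales auto

lemma deleted_chain_elem_0: "deleted.v 0 = v 0"
proof -
  have "\<not> L' y < L' (v 0)" if "y \<in> Q" for y
    using L'_less_iff[OF that chain_elem_in_Q] chain_elem_0 L_image that by force
  then have "L' (v 0) \<le> 1"
    using deleted.chain_elem_0 by (metis not_less)
  then have "L' (v 0) = 1"
    using deleted.L_image chain_elem_in_Q[of 0] by force
  then show ?thesis
    using deleted.label_eq_1_iff chain_elem_in_Q by simp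
qed

lemma L'_eq_1_iff: "z \<in> Q \<Longrightarrow> L' z = 1 \<longleftrightarrow> L z = 1"
  using deleted.label_eq_1_iff label_eq_1_iff deleted_chain_elem_0 by simp

lemma lsucc_deleted:
  assumes "i < p"
  shows "lsucc Q le L' (v i) = v (Suc i)"
proof -
  have "lsucc P le L (v i) \<in> Q"
    using chain_elem_in_Q[of "Suc i"] assms by (simp add: chain_elem_Suc)
  with assms show ?thesis
    using lsucc_restrict[of "v i" Q P le L L'] chain_elem_in_Q[of i] not_maximal_below_chain_len
      deleted.inj_L L'_less_iff
    by (simp add: chain_elem_Suc)
qed

lemma deleted_chain_elem: "i \<le> p \<Longrightarrow> deleted.v i = v i"
  by (induction i) (simp_all add: deleted_chain_elem_0 deleted.chain_elem_Suc lsucc_deleted)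

lemma maximal_deleted_iff:
  assumes "y \<in> promotion_chain P le L"
  shows "is_maximal Q le y \<longleftrightarrow> is_maximal P le y"
proof
  assume "is_maximal P le y"
  with assms chain_subset_Q show "is_maximal Q le y"
    by (auto simp: is_maximal_def)
next
  assume max_Q: "is_maximal Q le y"
  obtain i where i: "i \<le> p" "y = v i"
    using assms by (auto simp: promotion_chain_eq)
  show "is_maximal P le y"
  proof (rule ccontr)
    assume not_max: "\<not> is_maximal P le y"
    then have "i < p" using i maximal_chain_len le_neq_implies_less by blast
    then have "v (Suc i) \<in> Q" by (intro chain_elem_in_Q) simp
    with max_Q show False
      using lsucc_above[of y P le, where L = L] not_max i chain_elem_in_P
      by (auto simp: is_maximal_def chain_elem_Suc)
  qed
qed

lemma deleted_chain_len: "deleted.p = p"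
  unfolding chain_len_def[of Q]
proof (rule Least_equality)
  have "v p \<in> promotion_chain P le L"
    by (simp add: promotion_chain_eq)
  then show "is_maximal Q le (deleted.v p)"
    using maximal_chain_len maximal_deleted_iff deleted_chain_elem[of p] by simp
  show "p \<le> i" if max: "is_maximal Q le (deleted.v i)" for i
  proof (rule ccontr)
    assume "\<not> p \<le> i"
    then have "i < p" by simp
    moreover have "v i \<in> promotion_chain P le L"
      using \<open>i < p\<close> by (simp add: promotion_chain_eq)
    ultimately show False
      using max maximal_deleted_iff not_maximal_below_chain_len deleted_chain_elem[of i] by simp
  qed
qed

lemma deleted_promotion_chain: "promotion_chain Q le L' = promotion_chain P le L"
proof -
  have "deleted.v ` {..p} = v ` {..p}"
    by (rule image_cong) (simp_all add: deleted_chain_elem)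
  then show ?thesis
    by (simp add: deleted.promotion_chain_eq promotion_chain_eq deleted_chain_len)
qed

lemma deleted_shift:
  assumes "y \<in> Q"
  shows "deleted.shift y = shift y"
proof (cases "y \<in> promotion_chain P le L")
  case True
  then obtain i where i: "i \<le> p" "y = v i"
    by (auto simp: promotion_chain_eq)
  moreover have "(if i = p then 0 else Suc i) \<le> p"
    using i by auto
  ultimately show ?thesis
    using deleted.shift_chain_elem[of i] shift_chain_elem[of i] deleted_chain_elem deleted_chain_len
    by simp
next
  case False
  then show ?thesis
    using deleted.shift_outside_chain shift_outside_chain deleted_promotion_chain by simp
qed

lemma shift_in_Q: "y \<in> Q \<Longrightarrow> shift y \<in> Q"
  using shift_in_chain shift_outside_chain chain_subset_Q by (cases "y \<in> promotion_chain P le L") auto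

lemma lift_label_deleted_less_iff:
  assumes "z \<in> Q" "z' \<in> Q"
  shows "lift_label Q L' z < lift_label Q L' z' \<longleftrightarrow> lift_label P L z < lift_label P L z'"
proof -
  have "L' z \<le> card Q" "L' z' \<le> card Q"
    using deleted.L_image assms by auto
  moreover have "L z \<le> card P" "L z' \<le> card P"
    using L_image assms by auto
  ultimately show ?thesis
    using L'_eq_1_iff[OF assms(1)] L'_eq_1_iff[OF assms(2)] L'_less_iff[OF assms]
    by (auto simp: lift_label_def)
qed

lemma standardize_promotion: "standardize Q (promotion P le L) = promotion Q le L'"
proof (rule standardize_eqI)
  show "bij_betw (promotion Q le L') Q {1..card Q}"
    using deleted.is_labeling_promotion by (simp add: is_labeling_def)
  show "\<forall>y. y \<notin> Q \<longrightarrow> promotion Q le L' y = 0"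
    by (simp add: promotion_def)
  show "\<forall>y\<in>Q. \<forall>y'\<in>Q. promotion Q le L' y < promotion Q le L' y'
      \<longleftrightarrow> promotion P le L y < promotion P le L y'"
  proof (intro ballI)
    fix y y' assume y: "y \<in> Q" "y' \<in> Q"
    then have shifted: "shift y \<in> Q" "shift y' \<in> Q"
      using shift_in_Q by auto
    have pos: "0 < lift_label Q L' (shift y)" "0 < lift_label Q L' (shift y')"
      "0 < lift_label P L (shift y)" "0 < lift_label P L (shift y')"
      using shifted deleted.lift_label_pos lift_label_pos by auto
    have "promotion Q le L' y < promotion Q le L' y'
        \<longleftrightarrow> lift_label Q L' (shift y) - 1 < lift_label Q L' (shift y') - 1"
      using y by (simp add: deleted.promotion_eq_lift_shift deleted_shift)
    also have "\<dots> \<longleftrightarrow> lift_label Q L' (shift y) < lift_label Q L' (shift y')"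
      using pos(1,2) by arith
    also have "\<dots> \<longleftrightarrow> lift_label P L (shift y) < lift_label P L (shift y')"
      using shifted by (rule lift_label_deleted_less_iff)
    also have "\<dots> \<longleftrightarrow> lift_label P L (shift y) - 1 < lift_label P L (shift y') - 1"
      using pos(3,4) by arith
    also have "\<dots> \<longleftrightarrow> promotion P le L y < promotion P le L y'"
      using y by (simp add: promotion_eq_lift_shift)
    finally show "promotion Q le L' y < promotion Q le L' y' \<longleftrightarrow> promotion P le L y < promotion P le L y'" .
  qed
qed

end

lemma is_labeling_funpow_promotion:
  assumes "is_poset P le" "is_labeling P L"
  shows "is_labeling P ((promotion P le ^^ k) L)"
proof (cases "P = {}")
  case True
  then show ?thesis by (simp add: is_labeling_def bij_betw_def)
next
  case False
  with assms show ?thesis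
    by (induction k) (simp_all add: labeled_poset.is_labeling_promotion labeled_poset_def)
qed

lemma standardize_funpow_promotion:
  assumes "is_poset P le" "is_labeling P L" "x0 \<in> P"
    and "\<forall>\<alpha><\<gamma>. x0 \<notin> promotion_chain P le ((promotion P le ^^ \<alpha>) L)"
  shows "standardize (P - {x0}) ((promotion P le ^^ \<gamma>) L)
       = (promotion (P - {x0}) le ^^ \<gamma>) (standardize (P - {x0}) L)"
  using assms(4)
proof (induction \<gamma>)
  case (Suc \<gamma>)
  interpret labeled_poset_deletion P le "(promotion P le ^^ \<gamma>) L" x0
    using assms(1-3) is_labeling_funpow_promotion Suc.prems by unfold_locales auto
  show ?case
    using Suc standardize_promotion by simp
qed simp

theorem mainTheorem10:
  fixes P :: "'a set" and le :: "'a \<Rightarrow> 'a \<Rightarrow> bool" and L :: "'a \<Rightarrow> nat"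
    and x0 :: 'a and \<gamma> :: nat
  assumes "is_poset P le"
    and "is_labeling P L"
    and "x0 \<in> P"
    and "\<forall>\<alpha><\<gamma>. x0 \<notin> promotion_chain P le ((promotion P le ^^ \<alpha>) L)"
  shows "\<forall>y \<in> P - {x0}.
           standardize (P - {x0}) ((promotion P le ^^ \<gamma>) L) y
         = (promotion (P - {x0}) le ^^ \<gamma>) (standardize (P - {x0}) L) y"
  using standardize_funpow_promotion[OF assms] by simp

end
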